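(* Let $n$ and $r\ge 2$ be integers and let $q\ge r$ be a prime power. Suppose there exists a Steiner system $S(2,r,n)$, i.e. a collection $\mathcal{B}$ of $r$-element subsets of $I_n=\{1,\dots,n\}$ such that every 2-element subset of $I_n$ is contained in exactly one block of $\mathcal{B}$. Then there exists a linear $(n,k,d)=(n,n-2,n-1)$ exact-repair regenerating code over $\mathbb{F}_q$ with $$\alpha=\frac{n-1}{r-1},\qquad \beta=1,\qquad M=\frac{n(n-1)}{r}-1,$$ which has uncoded repair: when a node fails, each of the $n-1$ remaining nodes sends exactly one of its stored symbols, unchanged, and the lost node's content is computed from these symbols.
   Context: A linear $(n,k,d)$ exact-repair regenerating code over $\mathbb{F}_q$ with parameters $(\alpha,\beta,M)$ stores on each of $n$ nodes $\alpha$ symbols of $\mathbb{F}_q$, each a linear function of a message in $\mathbb{F}_q^M$, such that (i) the message can be recovered from the contents of any $k$ nodes, and (ii) for any node $j$ and any set $A$ of $d$ other nodes, each node in $A$ sends $\beta$ symbols computed from its own content, and from the $d\beta$ received symbols the exact content of node $j$ can be reconstructed. *)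

theory Defs
  imports Main "HOL-Library.FuncSet"
begin

definition steiner_system_2 :: "nat \<Rightarrow> nat \<Rightarrow> nat set set \<Rightarrow> bool" where
  "steiner_system_2 r n B \<longleftrightarrow>
     (\<forall>b\<in>B. b \<subseteq> {1..n} \<and> card b = r) \<and>
     (\<forall>P. P \<subseteq> {1..n} \<and> card P = 2 \<longrightarrow> (\<exists>!b. b \<in> B \<and> P \<subseteq> b))"

definition node_content ::
  "(nat \<Rightarrow> nat \<Rightarrow> nat \<Rightarrow> 'a::comm_semiring_1) \<Rightarrow> nat \<Rightarrow> 'a list \<Rightarrow> nat \<Rightarrow> 'a list" where
  "node_content G \<alpha> m j = map (\<lambda>i. \<Sum>l<length m. G j i l * m ! l) [0..<\<alpha>]"

definition regenerating_code ::
  "(nat \<Rightarrow> nat \<Rightarrow> nat \<Rightarrow> 'a::field) \<Rightarrow> nat \<Rightarrow> nat \<Rightarrow> nat \<Rightarrow> nat \<Rightarrow> nat \<Rightarrow> nat \<Rightarrow> bool" where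
  "regenerating_code G n k d \<alpha> \<beta> M \<longleftrightarrow>
     (\<forall>K. K \<subseteq> {1..n} \<and> card K = k \<longrightarrow>
        (\<exists>dec :: (nat \<Rightarrow> 'a list) \<Rightarrow> 'a list.
           \<forall>m. length m = M \<longrightarrow> dec (\<lambda>j\<in>K. node_content G \<alpha> m j) = m)) \<and>
     (\<forall>j\<in>{1..n}. \<forall>A. A \<subseteq> {1..n} - {j} \<and> card A = d \<longrightarrow>
        (\<exists>(S :: nat \<Rightarrow> nat \<Rightarrow> nat \<Rightarrow> 'a) (rec :: (nat \<Rightarrow> 'a list) \<Rightarrow> 'a list).
           \<forall>m. length m = M \<longrightarrow>
             rec (\<lambda>h\<in>A. map (\<lambda>t. \<Sum>i<\<alpha>. S h t i * node_content G \<alpha> m h ! i) [0..<\<beta>])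
               = node_content G \<alpha> m j))"

definition uncoded_repair ::
  "(nat \<Rightarrow> nat \<Rightarrow> nat \<Rightarrow> 'a::field) \<Rightarrow> nat \<Rightarrow> nat \<Rightarrow> nat \<Rightarrow> bool" where
  "uncoded_repair G n \<alpha> M \<longleftrightarrow>
     (\<forall>j\<in>{1..n}. \<exists>(s :: nat \<Rightarrow> nat) (rec :: (nat \<Rightarrow> 'a) \<Rightarrow> 'a list).
        (\<forall>h\<in>{1..n} - {j}. s h < \<alpha>) \<and>
        (\<forall>m. length m = M \<longrightarrow>
           rec (\<lambda>h\<in>{1..n} - {j}. node_content G \<alpha> m h ! s h) = node_content G \<alpha> m j))"

end

theory Submission
  imports Defs
begin

text \<open>Nodes are the points of the Steiner system. Every block \<beta> carries the symbols
  x(\<beta>,p), p \<in> \<beta>, subject to the local parity check \<Sum>{x(\<beta>,p) | p \<in> \<beta>} = 0, and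
  node p stores the symbols of the \<alpha> = (n-1)/(r-1) blocks through p. Any two nodes lie
  on exactly one common block, so a failed node j is repaired by uncoded transfer: each
  helper h sends its symbol in the block through h and j, and x(\<beta>,j) is minus the sum
  of the other symbols of \<beta>. One additional global parity check
  \<Sum> w(\<beta>,p) x(\<beta>,p) = 0, with weights that are distinct inside every block (possible
  as q \<ge> r), lets any n-2 nodes recover everything: the two missing nodes share a single
  block, on which the local and the global check are two independent equations for the
  two unknown symbols. The code has dimension |B|(r-1) - 1 = n(n-1)/r - 1.\<close>

lemma ex_inj_on_vanishing_at:
  fixes A :: "'b set"
  assumes "finite A" and "card A \<le> card (UNIV :: 'a::{ab_group_add,finite} set)" and "a \<in> A"
  shows "\<exists>c :: 'b \<Rightarrow> 'a. inj_on c A \<and> c a = 0"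
proof -
  obtain f :: "'b \<Rightarrow> 'a" where "inj_on f A"
    using card_le_inj[OF assms(1) finite_UNIV] assms(2) by blast
  then have "inj_on (\<lambda>x. f x - f a) A"
    by (simp add: inj_on_def)
  then show ?thesis
    by (intro exI[of _ "\<lambda>x. f x - f a"]) simp
qed

definition lin_form :: "(nat \<Rightarrow> 'a::comm_semiring_1) \<Rightarrow> 'a list \<Rightarrow> 'a" where
  "lin_form a m = (\<Sum>l<length m. a l * m ! l)"

lemma nth_node_content: "i < \<alpha> \<Longrightarrow> node_content G \<alpha> m j ! i = lin_form (G j i) m"
  by (simp add: node_content_def lin_form_def)

lemma lin_form_sum: "lin_form (\<lambda>l. \<Sum>q\<in>Q. a q l) m = (\<Sum>q\<in>Q. lin_form (a q) m)"
  unfolding lin_form_def by (simp add: sum_distrib_right) (rule sum.swap)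

lemma lin_form_scale: "lin_form (\<lambda>l. k * a l) m = k * lin_form a m"
  unfolding lin_form_def by (simp add: sum_distrib_left mult.assoc)

lemma lin_form_uminus: "lin_form (\<lambda>l. - a l) m = - lin_form (a :: nat \<Rightarrow> 'a::comm_ring_1) m"
  unfolding lin_form_def by (simp add: sum_negf)

lemma lin_form_unit: "i < length m \<Longrightarrow> lin_form (\<lambda>l. of_bool (l = i)) m = m ! i"
  unfolding lin_form_def by simp

text \<open>For d = n - 1 the helper set is all other nodes, and sending one stored symbol
  unchanged is the linear repair map with a 0/1 coefficient matrix.\<close>
lemma regenerating_code_if_uncoded_repair:
  assumes data_collection: "\<And>K. K \<subseteq> {1..n} \<Longrightarrow> card K = k \<Longrightarrow>
      \<exists>dec. \<forall>m. length m = M \<longrightarrow> dec (\<lambda>j\<in>K. node_content G \<alpha> m j) = m"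
    and repair: "uncoded_repair G n \<alpha> M"
  shows "regenerating_code G n k (n - 1) \<alpha> 1 M"
  unfolding regenerating_code_def
proof (intro conjI allI impI ballI)
  fix K assume "K \<subseteq> {1..n} \<and> card K = k"
  then show "\<exists>dec. \<forall>m. length m = M \<longrightarrow> dec (\<lambda>j\<in>K. node_content G \<alpha> m j) = m"
    using data_collection by blast
next
  fix j A assume j: "j \<in> {1..n}" and A: "A \<subseteq> {1..n} - {j} \<and> card A = n - 1"
  then have A_eq: "A = {1..n} - {j}"
    by (intro card_subset_eq) auto
  obtain s and rec :: "(nat \<Rightarrow> 'a) \<Rightarrow> 'a list" where
    s: "\<forall>h\<in>{1..n} - {j}. s h < \<alpha>" and
    rec: "\<forall>m. length m = M \<longrightarrow>
      rec (\<lambda>h\<in>{1..n} - {j}. node_content G \<alpha> m h ! s h) = node_content G \<alpha> m j"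
    using repair j unfolding uncoded_repair_def by blast
  let ?S = "\<lambda>h t i. of_bool (i = s h) :: 'a"
  let ?sent = "\<lambda>m. \<lambda>h\<in>A. map (\<lambda>t. \<Sum>i<\<alpha>. ?S h t i * node_content G \<alpha> m h ! i) [0..<1]"
  have sent: "(\<lambda>h\<in>{1..n} - {j}. hd (?sent m h)) = (\<lambda>h\<in>{1..n} - {j}. node_content G \<alpha> m h ! s h)"
    for m
    using s by (intro restrict_ext) (simp add: A_eq)
  show "\<exists>S rec. \<forall>m. length m = M \<longrightarrow>
      rec (\<lambda>h\<in>A. map (\<lambda>t. \<Sum>i<\<alpha>. S h t i * node_content G \<alpha> m h ! i) [0..<1])
        = node_content G \<alpha> m j"
  proof (intro exI[of _ ?S] exI[of _ "\<lambda>g. rec (\<lambda>h\<in>{1..n} - {j}. hd (g h))"] allI impI)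
    fix m :: "'a list" assume "length m = M"
    then show "rec (\<lambda>h\<in>{1..n} - {j}. hd (?sent m h)) = node_content G \<alpha> m j"
      by (simp only: sent rec)
  qed
qed

locale steiner_system =
  fixes r n :: nat and B :: "nat set set"
  assumes two_le_r: "2 \<le> r" and steiner: "steiner_system_2 r n B"
begin

abbreviation alpha :: nat where "alpha \<equiv> (n - 1) div (r - 1)"

lemma block_subset: "\<beta> \<in> B \<Longrightarrow> \<beta> \<subseteq> {1..n}"
  and card_block: "\<beta> \<in> B \<Longrightarrow> card \<beta> = r"
  using steiner[unfolded steiner_system_2_def, THEN conjunct1] by simp_all

lemma finite_block: "\<beta> \<in> B \<Longrightarrow> finite \<beta>"
  using block_subset finite_subset by blast

lemma Min_in_block: "\<beta> \<in> B \<Longrightarrow> Min \<beta> \<in> \<beta>"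
  using card_block[of \<beta>] finite_block[of \<beta>] two_le_r by (intro Min_in) auto

lemma finite_blocks: "finite B"
  using block_subset by (intro finite_subset[of B "Pow {1..n}"]) auto

lemma ex1_block_through_pair:
  assumes "p \<in> {1..n}" and "q \<in> {1..n}" and "p \<noteq> q"
  shows "\<exists>!\<beta>. \<beta> \<in> B \<and> p \<in> \<beta> \<and> q \<in> \<beta>"
proof -
  have pairs: "\<forall>P. P \<subseteq> {1..n} \<and> card P = 2 \<longrightarrow> (\<exists>!\<beta>. \<beta> \<in> B \<and> P \<subseteq> \<beta>)"
    using steiner[unfolded steiner_system_2_def, THEN conjunct2] .
  have "\<exists>!\<beta>. \<beta> \<in> B \<and> {p, q} \<subseteq> \<beta>"
    using assms by (intro pairs[rule_format]) auto
  then show ?thesis by simp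
qed

lemma block_through_pair_unique:
  assumes "\<beta> \<in> B" "\<beta>' \<in> B" "p \<in> \<beta>" "q \<in> \<beta>" "p \<in> \<beta>'" "q \<in> \<beta>'" "p \<noteq> q"
  shows "\<beta> = \<beta>'"
  using ex1_block_through_pair[of p q] assms block_subset by blast

definition blocks_through :: "nat \<Rightarrow> nat set set" where
  "blocks_through p = {\<beta> \<in> B. p \<in> \<beta>}"

lemma card_blocks_through_mult:
  assumes p: "p \<in> {1..n}"
  shows "card (blocks_through p) * (r - 1) = n - 1"
proof -
  have cover: "{1..n} - {p} = (\<Union>\<beta>\<in>blocks_through p. \<beta> - {p})"
  proof
    show "{1..n} - {p} \<subseteq> (\<Union>\<beta>\<in>blocks_through p. \<beta> - {p})"
    proof
      fix q assume q: "q \<in> {1..n} - {p}"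
      then obtain \<beta> where "\<beta> \<in> B" "p \<in> \<beta>" "q \<in> \<beta>"
        using ex1_block_through_pair[OF p, of q] by auto
      then show "q \<in> (\<Union>\<beta>\<in>blocks_through p. \<beta> - {p})"
        using q unfolding blocks_through_def by blast
    qed
    show "(\<Union>\<beta>\<in>blocks_through p. \<beta> - {p}) \<subseteq> {1..n} - {p}"
      using block_subset unfolding blocks_through_def by blast
  qed
  have "n - 1 = card ({1..n} - {p})"
    using p by simp
  also have "\<dots> = card (\<Union>\<beta>\<in>blocks_through p. \<beta> - {p})"
    by (simp only: cover)
  also have "\<dots> = (\<Sum>\<beta>\<in>blocks_through p. card (\<beta> - {p}))"
  proof (intro card_UN_disjoint ballI impI)
    fix \<beta> \<beta>' assume "\<beta> \<in> blocks_through p" "\<beta>' \<in> blocks_through p" "\<beta> \<noteq> \<beta>'"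
    then show "(\<beta> - {p}) \<inter> (\<beta>' - {p}) = {}"
      using block_through_pair_unique unfolding blocks_through_def by blast
  qed (use finite_blocks finite_block in \<open>auto simp: blocks_through_def\<close>)
  also have "\<dots> = (\<Sum>\<beta>\<in>blocks_through p. r - 1)"
    by (intro sum.cong) (auto simp: blocks_through_def card_block finite_block)
  finally show ?thesis
    by simp
qed

lemma card_blocks_through: "p \<in> {1..n} \<Longrightarrow> card (blocks_through p) = alpha"
proof -
  assume p: "p \<in> {1..n}"
  have "r - 1 \<noteq> 0"
    using two_le_r by simp
  then show ?thesis
    using card_blocks_through_mult[OF p] by (metis nonzero_mult_div_cancel_right)
qed

definition incidences :: "(nat set \<times> nat) set" where
  "incidences = (SIGMA \<beta>:B. \<beta>)"

lemma finite_incidences: "finite incidences"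
  unfolding incidences_def using finite_blocks finite_block by auto

lemma card_incidences: "card incidences = card B * r"
  unfolding incidences_def using finite_blocks finite_block card_block
  by (simp add: card_SigmaI)

lemma card_incidences_by_points: "card incidences = n * alpha"
proof -
  have "incidences = prod.swap ` (SIGMA p:{1..n}. blocks_through p)"
    unfolding incidences_def blocks_through_def using block_subset by force
  then have "card incidences = (\<Sum>p\<in>{1..n}. card (blocks_through p))"
    using finite_blocks by (simp add: card_image card_SigmaI blocks_through_def)
  then show ?thesis
    by (simp add: card_blocks_through)
qed

lemma card_blocks_mult: "n * (n - 1) div r = card B * (r - 1)"
proof -
  have "n * (n - 1) = n * alpha * (r - 1)"
  proof (cases "n = 0")
    case False
    then show ?thesis
      using card_blocks_through_mult[of 1] card_blocks_through[of 1] by simp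
  qed simp
  also have "\<dots> = card B * (r - 1) * r"
    using card_incidences card_incidences_by_points by simp
  finally show ?thesis
    using two_le_r by simp
qed

lemma ex_block_weights:
  assumes "r \<le> card (UNIV :: 'a::{ab_group_add,finite} set)"
  shows "\<exists>w :: nat set \<times> nat \<Rightarrow> 'a.
           \<forall>\<beta>\<in>B. inj_on (\<lambda>p. w (\<beta>, p)) \<beta> \<and> w (\<beta>, Min \<beta>) = 0"
proof -
  have "\<forall>\<beta>\<in>B. \<exists>c :: nat \<Rightarrow> 'a. inj_on c \<beta> \<and> c (Min \<beta>) = 0"
    using assms finite_block card_block Min_in_block by (auto intro: ex_inj_on_vanishing_at)
  then obtain c :: "nat set \<Rightarrow> nat \<Rightarrow> 'a"
    where "\<forall>\<beta>\<in>B. inj_on (c \<beta>) \<beta> \<and> c \<beta> (Min \<beta>) = 0"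
    by (auto dest: bchoice)
  then show ?thesis
    by (intro exI[of _ "\<lambda>(\<beta>, p). c \<beta> p"]) simp
qed

end

locale steiner_code = steiner_system +
  fixes w :: "nat set \<times> nat \<Rightarrow> 'a::field"
  assumes inj_on_weights: "\<beta> \<in> B \<Longrightarrow> inj_on (\<lambda>p. w (\<beta>, p)) \<beta>"
    and weight_Min: "\<beta> \<in> B \<Longrightarrow> w (\<beta>, Min \<beta>) = 0"
begin

definition codeword :: "(nat set \<times> nat \<Rightarrow> 'a) \<Rightarrow> bool" where
  "codeword x \<longleftrightarrow>
     (\<forall>\<beta>\<in>B. (\<Sum>p\<in>\<beta>. x (\<beta>, p)) = 0) \<and> (\<Sum>q\<in>incidences. w q * x q) = 0"

lemma codeword_diff: "codeword x \<Longrightarrow> codeword y \<Longrightarrow> codeword (\<lambda>q. x q - y q)"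
  by (simp add: codeword_def sum_subtractf right_diff_distrib)

lemma codeword_block_entry:
  assumes "codeword x" and "\<beta> \<in> B" and "p \<in> \<beta>"
  shows "x (\<beta>, p) = - (\<Sum>q\<in>\<beta> - {p}. x (\<beta>, q))"
proof -
  have "x (\<beta>, p) + (\<Sum>q\<in>\<beta> - {p}. x (\<beta>, q)) = 0"
    using assms finite_block sum.remove[of \<beta> p "\<lambda>q. x (\<beta>, q)"] unfolding codeword_def by simp
  then show ?thesis
    by (simp add: eq_neg_iff_add_eq_0)
qed

lemma codeword_zero_on_pair_block:
  assumes x: "codeword x" and \<beta>: "\<beta> \<in> B" "i \<in> \<beta>" "j \<in> \<beta>" "i \<noteq> j"
    and zero: "\<forall>q\<in>incidences - {(\<beta>, i), (\<beta>, j)}. x q = 0"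
  shows "x (\<beta>, i) = 0" and "x (\<beta>, j) = 0"
proof -
  have inc: "{(\<beta>, i), (\<beta>, j)} \<subseteq> incidences"
    using \<beta> unfolding incidences_def by auto
  have "(\<Sum>p\<in>\<beta>. x (\<beta>, p)) = (\<Sum>p\<in>{i, j}. x (\<beta>, p))"
    using \<beta> zero finite_block by (intro sum.mono_neutral_right) (auto simp: incidences_def)
  then have local: "x (\<beta>, i) + x (\<beta>, j) = 0"
    using x \<beta> unfolding codeword_def by simp
  have "(\<Sum>q\<in>incidences. w q * x q) = (\<Sum>q\<in>{(\<beta>, i), (\<beta>, j)}. w q * x q)"
    using inc zero finite_incidences by (intro sum.mono_neutral_right) auto
  then have global: "w (\<beta>, i) * x (\<beta>, i) + w (\<beta>, j) * x (\<beta>, j) = 0"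
    using x \<beta>(4) unfolding codeword_def by simp
  have "x (\<beta>, j) = - x (\<beta>, i)"
    using local by (simp add: add_eq_0_iff2 add.commute)
  then have "(w (\<beta>, i) - w (\<beta>, j)) * x (\<beta>, i) = 0"
    using global by (simp add: algebra_simps)
  moreover have "w (\<beta>, i) \<noteq> w (\<beta>, j)"
    using inj_on_weights \<beta> by (auto dest: inj_onD)
  ultimately show "x (\<beta>, i) = 0"
    by simp
  then show "x (\<beta>, j) = 0"
    using local by simp
qed

lemma codeword_zero_off_pair:
  assumes x: "codeword x" and "i \<noteq> j"
    and zero: "\<And>\<beta> p. (\<beta>, p) \<in> incidences \<Longrightarrow> p \<noteq> i \<Longrightarrow> p \<noteq> j \<Longrightarrow> x (\<beta>, p) = 0"
  shows "q \<in> incidences \<Longrightarrow> x q = 0"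
proof -
  have single: "x (\<beta>, p) = 0" if \<beta>: "\<beta> \<in> B" "p \<in> \<beta>" "\<not> (i \<in> \<beta> \<and> j \<in> \<beta>)" for \<beta> p
  proof (cases "p = i \<or> p = j")
    case True
    then have "\<forall>q\<in>\<beta> - {p}. x (\<beta>, q) = 0"
      using \<beta> zero unfolding incidences_def by auto
    then show ?thesis
      using codeword_block_entry[OF x \<beta>(1,2)] by simp
  qed (use \<beta> zero in \<open>auto simp: incidences_def\<close>)
  fix q assume q: "q \<in> incidences"
  then obtain \<beta> p where qp: "q = (\<beta>, p)" "\<beta> \<in> B" "p \<in> \<beta>"
    unfolding incidences_def by auto
  show "x q = 0"
  proof (cases "i \<in> \<beta> \<and> j \<in> \<beta>")
    case True
    have "\<forall>q'\<in>incidences - {(\<beta>, i), (\<beta>, j)}. x q' = 0"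
    proof
      fix q' assume "q' \<in> incidences - {(\<beta>, i), (\<beta>, j)}"
      then obtain \<beta>' p' where "q' = (\<beta>', p')" "\<beta>' \<in> B" "p' \<in> \<beta>'"
        and "(\<beta>', p') \<noteq> (\<beta>, i)" "(\<beta>', p') \<noteq> (\<beta>, j)"
        unfolding incidences_def by auto
      then show "x q' = 0"
        using True single[of \<beta>' p'] zero[of \<beta>' p'] qp \<open>i \<noteq> j\<close>
          block_through_pair_unique[of \<beta> \<beta>' i j]
        unfolding incidences_def by auto
    qed
    then show ?thesis
      using codeword_zero_on_pair_block[OF x qp(2) _ _ \<open>i \<noteq> j\<close>] True qp zero[of \<beta> p]
      unfolding incidences_def by auto
  qed (use single qp in simp)
qed

definition free_positions :: "(nat set \<times> nat) set" where
  "free_positions = (SIGMA \<beta>:B. \<beta> - {Min \<beta>})"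

definition pivot :: "nat set \<times> nat" where
  "pivot = (SOME q. q \<in> free_positions)"

definition message_positions :: "(nat set \<times> nat) set" where
  "message_positions = free_positions - {pivot}"

abbreviation message_length :: nat where
  "message_length \<equiv> n * (n - 1) div r - 1"

definition message_index :: "nat set \<times> nat \<Rightarrow> nat" where
  "message_index = (SOME f. bij_betw f message_positions {0..<message_length})"

lemma free_positions_subset: "free_positions \<subseteq> incidences"
  unfolding free_positions_def incidences_def by auto

lemma finite_free_positions: "finite free_positions"
  using free_positions_subset finite_incidences by (rule finite_subset)

lemma weight_nonzero:
  assumes "q \<in> free_positions"
  shows "w q \<noteq> 0"
proof -
  obtain \<beta> p where q: "q = (\<beta>, p)" "\<beta> \<in> B" "p \<in> \<beta>" "p \<noteq> Min \<beta>"
    using assms unfolding free_positions_def by auto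
  then have "w (\<beta>, p) \<noteq> w (\<beta>, Min \<beta>)"
    using inj_on_weights Min_in_block by (auto dest: inj_onD)
  then show ?thesis
    using q weight_Min by simp
qed

lemma card_message_positions: "card message_positions = message_length"
proof -
  have "card free_positions = card B * (r - 1)"
    unfolding free_positions_def using finite_blocks finite_block card_block Min_in_block
    by (simp add: card_SigmaI)
  moreover have "card message_positions = card free_positions - 1"
  proof (cases "free_positions = {}")
    case False
    then have "pivot \<in> free_positions"
      unfolding pivot_def by (simp add: some_in_eq)
    then show ?thesis
      unfolding message_positions_def using finite_free_positions by simp
  qed (simp add: message_positions_def)
  ultimately show ?thesis
    using card_blocks_mult by simp
qed

lemma bij_betw_message_index: "bij_betw message_index message_positions {0..<message_length}"
proof -
  have "\<exists>f. bij_betw f message_positions {0..<message_length}"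
    using ex_bij_betw_finite_nat[of message_positions] finite_free_positions card_message_positions
    unfolding message_positions_def by auto
  then show ?thesis
    unfolding message_index_def by (rule someI_ex)
qed

text \<open>Coefficient vectors of the symbols of a codeword as linear forms of the message:
  a message coordinate sits at every free position except the pivot, the pivot is solved
  from the global parity check, and the position of the minimum of each block from the
  local one.\<close>
definition free_coeffs :: "nat set \<times> nat \<Rightarrow> nat \<Rightarrow> 'a" where
  "free_coeffs q =
     (if q \<in> message_positions then (\<lambda>l. of_bool (l = message_index q))
      else (\<lambda>l. - (\<Sum>q'\<in>message_positions. w q' / w pivot * of_bool (l = message_index q'))))"

definition coeffs :: "nat set \<times> nat \<Rightarrow> nat \<Rightarrow> 'a" where
  "coeffs q =
     (if snd q = Min (fst q) then (\<lambda>l. - (\<Sum>p\<in>fst q - {snd q}. free_coeffs (fst q, p) l))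
      else free_coeffs q)"

definition encode :: "'a list \<Rightarrow> nat set \<times> nat \<Rightarrow> 'a" where
  "encode m q = lin_form (coeffs q) m"

lemma encode_free: "q \<in> free_positions \<Longrightarrow> encode m q = lin_form (free_coeffs q) m"
  unfolding encode_def coeffs_def free_positions_def by auto

lemma encode_Min: "encode m (\<beta>, Min \<beta>) = - (\<Sum>p\<in>\<beta> - {Min \<beta>}. encode m (\<beta>, p))"
proof -
  have "encode m (\<beta>, p) = lin_form (free_coeffs (\<beta>, p)) m" if "p \<in> \<beta> - {Min \<beta>}" for p
    using that unfolding encode_def coeffs_def by simp
  then show ?thesis
    unfolding encode_def coeffs_def by (simp add: lin_form_uminus lin_form_sum)
qed

lemma message_index_less: "q \<in> message_positions \<Longrightarrow> message_index q < message_length"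
  using bij_betw_apply[OF bij_betw_message_index] by auto

lemma encode_message_position:
  assumes "q \<in> message_positions" and "length m = message_length"
  shows "encode m q = m ! message_index q"
  using assms message_index_less[of q] encode_free[of q]
  unfolding message_positions_def free_coeffs_def by (simp add: lin_form_unit)

lemma encode_pivot:
  assumes "pivot \<in> free_positions" and "length m = message_length"
  shows "w pivot * encode m pivot = - (\<Sum>q\<in>message_positions. w q * encode m q)"
proof -
  have "encode m pivot =
      lin_form (\<lambda>l. - (\<Sum>q\<in>message_positions. w q / w pivot * of_bool (l = message_index q))) m"
    using assms(1) by (simp add: encode_free free_coeffs_def message_positions_def)
  also have "\<dots> = - (\<Sum>q\<in>message_positions.
      w q / w pivot * lin_form (\<lambda>l. of_bool (l = message_index q)) m)"
    by (simp only: lin_form_uminus lin_form_sum lin_form_scale)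
  also have "\<dots> = - (\<Sum>q\<in>message_positions. w q / w pivot * encode m q)"
    using assms(2) message_index_less encode_message_position by (simp add: lin_form_unit)
  finally show ?thesis
    using weight_nonzero[OF assms(1)] by (simp add: sum_distrib_left)
qed

lemma codeword_encode:
  assumes "length m = message_length"
  shows "codeword (encode m)"
  unfolding codeword_def
proof (intro conjI ballI)
  fix \<beta> assume \<beta>: "\<beta> \<in> B"
  show "(\<Sum>p\<in>\<beta>. encode m (\<beta>, p)) = 0"
    using sum.remove[OF finite_block[OF \<beta>] Min_in_block[OF \<beta>], of "\<lambda>p. encode m (\<beta>, p)"]
    by (simp add: encode_Min)
next
  have "(\<Sum>q\<in>incidences. w q * encode m q) = (\<Sum>q\<in>free_positions. w q * encode m q)"
    using free_positions_subset finite_incidences weight_Min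
    by (intro sum.mono_neutral_right) (auto simp: incidences_def free_positions_def)
  also have "\<dots> = 0"
  proof (cases "free_positions = {}")
    case False
    then have "pivot \<in> free_positions"
      unfolding pivot_def by (simp add: some_in_eq)
    then show ?thesis
      using sum.remove[OF finite_free_positions, of pivot "\<lambda>q. w q * encode m q"] encode_pivot[OF _ assms]
      unfolding message_positions_def by simp
  qed simp
  finally show "(\<Sum>q\<in>incidences. w q * encode m q) = 0" .
qed

definition block_enum :: "nat \<Rightarrow> nat \<Rightarrow> nat set" where
  "block_enum p = (SOME f. bij_betw f {0..<alpha} (blocks_through p))"

lemma bij_betw_block_enum: "p \<in> {1..n} \<Longrightarrow> bij_betw (block_enum p) {0..<alpha} (blocks_through p)"
  using someI_ex[OF ex_bij_betw_nat_finite[of "blocks_through p"]] finite_blocks card_blocks_through[of p]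
  unfolding block_enum_def blocks_through_def by auto

lemma block_enum_in_blocks_through:
  "p \<in> {1..n} \<Longrightarrow> s < alpha \<Longrightarrow> block_enum p s \<in> blocks_through p"
  using bij_betw_apply[OF bij_betw_block_enum] by auto

lemma ex_block_enum:
  assumes "p \<in> {1..n}" and "\<beta> \<in> blocks_through p"
  shows "\<exists>s<alpha. block_enum p s = \<beta>"
proof -
  have "\<beta> \<in> block_enum p ` {0..<alpha}"
    using bij_betw_imp_surj_on[OF bij_betw_block_enum[OF assms(1)]] assms(2) by simp
  then show ?thesis
    by auto
qed

definition generator :: "nat \<Rightarrow> nat \<Rightarrow> nat \<Rightarrow> 'a" where
  "generator p s = coeffs (block_enum p s, p)"

lemma nth_node_content_generator:
  "s < alpha \<Longrightarrow> node_content generator alpha m p ! s = encode m (block_enum p s, p)"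
  by (simp add: nth_node_content generator_def encode_def)

lemma message_eq_if_node_contents_agree:
  assumes K: "K \<subseteq> {1..n}" "card K = n - 2"
    and length: "length m = message_length" "length m' = message_length"
    and agree: "\<forall>p\<in>K. node_content generator alpha m p = node_content generator alpha m' p"
  shows "m = m'"
proof (cases "n < 2")
  case True
  then have "message_length = 0"
    by (cases n) auto
  then show ?thesis
    using length by simp
next
  case False
  then have "card ({1..n} - K) = 2"
    using K by (simp add: card_Diff_subset finite_subset)
  then obtain i j where ij: "{1..n} - K = {i, j}" "i \<noteq> j"
    by (meson card_2_iff)
  have diff_zero: "encode m q - encode m' q = 0" if q: "q \<in> incidences" for q
  proof (rule codeword_zero_off_pair[OF codeword_diff[OF codeword_encode codeword_encode] \<open>i \<noteq> j\<close> _ q])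
    fix \<beta> p assume "(\<beta>, p) \<in> incidences" "p \<noteq> i" "p \<noteq> j"
    then have p: "p \<in> K" "\<beta> \<in> blocks_through p"
      using ij block_subset unfolding incidences_def blocks_through_def by auto
    then obtain s where "s < alpha" "block_enum p s = \<beta>"
      using ex_block_enum K by blast
    then show "encode m (\<beta>, p) - encode m' (\<beta>, p) = 0"
      using agree p(1) nth_node_content_generator[of s m p] nth_node_content_generator[of s m' p]
      by simp
  qed (use length in auto)
  have encode_eq: "encode m q = encode m' q" if "q \<in> message_positions" for q
    using that diff_zero[of q] free_positions_subset unfolding message_positions_def by auto
  show ?thesis
  proof (rule nth_equalityI)
    fix l assume "l < length m"
    then have "l \<in> message_index ` message_positions"
      using length bij_betw_imp_surj_on[OF bij_betw_message_index] by simp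
    then obtain q where "q \<in> message_positions" "l = message_index q"
      by blast
    then show "m ! l = m' ! l"
      using encode_eq encode_message_position length by metis
  qed (use length in simp)
qed

lemma data_collection:
  assumes "K \<subseteq> {1..n}" and "card K = n - 2"
  shows "\<exists>dec. \<forall>m. length m = message_length \<longrightarrow>
           dec (\<lambda>p\<in>K. node_content generator alpha m p) = m"
proof -
  let ?contents = "\<lambda>m. \<lambda>p\<in>K. node_content generator alpha m p"
  have inj: "inj_on ?contents {m. length m = message_length}"
  proof (rule inj_onI)
    fix m m' assume m: "m \<in> {m. length m = message_length}" "m' \<in> {m. length m = message_length}"
      and eq: "?contents m = ?contents m'"
    have "\<forall>p\<in>K. node_content generator alpha m p = node_content generator alpha m' p"
    proof
      fix p assume "p \<in> K"
      then show "node_content generator alpha m p = node_content generator alpha m' p"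
        using fun_cong[OF eq, of p] by simp
    qed
    then show "m = m'"
      using message_eq_if_node_contents_agree[OF assms] m by simp
  qed
  show ?thesis
  proof (intro exI allI impI)
    fix m :: "'a list" assume "length m = message_length"
    then show "inv_into {m. length m = message_length} ?contents (?contents m) = m"
      by (intro inv_into_f_f[OF inj]) simp
  qed
qed

lemma uncoded_repair: "uncoded_repair generator n alpha message_length"
  unfolding uncoded_repair_def
proof
  fix j assume j: "j \<in> {1..n}"
  define s where "s h = (SOME s. s < alpha \<and> j \<in> block_enum h s)" for h
  have s: "s h < alpha \<and> j \<in> block_enum h (s h)" if h: "h \<in> {1..n} - {j}" for h
  proof -
    obtain \<beta> where "\<beta> \<in> B" "h \<in> \<beta>" "j \<in> \<beta>"
      using ex1_block_through_pair[of h j] h j by auto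
    then obtain t where "t < alpha" "block_enum h t = \<beta>"
      using ex_block_enum[of h \<beta>] h unfolding blocks_through_def by auto
    then have "t < alpha \<and> j \<in> block_enum h t"
      using \<open>j \<in> \<beta>\<close> by simp
    then show ?thesis
      unfolding s_def by (rule someI)
  qed
  have sent: "node_content generator alpha m h ! s h = encode m (\<beta>, h)"
    if "\<beta> \<in> B" "j \<in> \<beta>" "h \<in> \<beta> - {j}" for \<beta> h m
  proof -
    have h: "h \<in> {1..n} - {j}"
      using that block_subset[OF that(1)] by auto
    then have "block_enum h (s h) \<in> blocks_through h"
      using s block_enum_in_blocks_through by blast
    then have "block_enum h (s h) \<in> B" "h \<in> block_enum h (s h)"
      unfolding blocks_through_def by auto
    then have "block_enum h (s h) = \<beta>"
      using that s[OF h] by (intro block_through_pair_unique[of _ \<beta> h j]) auto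
    then show ?thesis
      using s[OF h] nth_node_content_generator by simp
  qed
  define rec where "rec f = map (\<lambda>t. - (\<Sum>h\<in>block_enum j t - {j}. f h)) [0..<alpha]"
    for f :: "nat \<Rightarrow> 'a"
  have "rec (\<lambda>h\<in>{1..n} - {j}. node_content generator alpha m h ! s h) = node_content generator alpha m j"
    if "length m = message_length" for m
  proof (rule nth_equalityI)
    fix t assume "t < length (rec (\<lambda>h\<in>{1..n} - {j}. node_content generator alpha m h ! s h))"
    then have t: "t < alpha"
      unfolding rec_def by simp
    define \<beta> where "\<beta> = block_enum j t"
    have \<beta>: "\<beta> \<in> B" "j \<in> \<beta>"
      using block_enum_in_blocks_through[OF j t] unfolding \<beta>_def blocks_through_def by auto
    have "(\<Sum>h\<in>\<beta> - {j}. (\<lambda>h\<in>{1..n} - {j}. node_content generator alpha m h ! s h) h)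
        = (\<Sum>h\<in>\<beta> - {j}. encode m (\<beta>, h))"
      using \<beta> sent block_subset[OF \<beta>(1)] by (intro sum.cong) auto
    also have "- \<dots> = encode m (\<beta>, j)"
      using codeword_block_entry[OF codeword_encode[OF that] \<beta>] by simp
    finally show "rec (\<lambda>h\<in>{1..n} - {j}. node_content generator alpha m h ! s h) ! t
        = node_content generator alpha m j ! t"
      using t nth_node_content_generator unfolding rec_def \<beta>_def by simp
  qed (simp add: rec_def node_content_def)
  then show "\<exists>s rec. (\<forall>h\<in>{1..n} - {j}. s h < alpha) \<and>
      (\<forall>m. length m = message_length \<longrightarrow>
         rec (\<lambda>h\<in>{1..n} - {j}. node_content generator alpha m h ! s h) = node_content generator alpha m j)"
    using s by blast
qed

lemma regenerating_code_with_uncoded_repair: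
  "regenerating_code generator n (n - 2) (n - 1) alpha 1 message_length
     \<and> uncoded_repair generator n alpha message_length"
  using regenerating_code_if_uncoded_repair[OF data_collection uncoded_repair] uncoded_repair by blast

end

theorem mainTheorem2:
  fixes n r :: nat
  assumes "r \<ge> 2"
    and "card (UNIV :: 'a::{field,finite} set) \<ge> r"
    and "\<exists>B. steiner_system_2 r n B"
  shows "\<exists>G :: nat \<Rightarrow> nat \<Rightarrow> nat \<Rightarrow> 'a::{field,finite}.
           regenerating_code G n (n - 2) (n - 1) ((n - 1) div (r - 1)) 1 (n * (n - 1) div r - 1)
         \<and> uncoded_repair G n ((n - 1) div (r - 1)) (n * (n - 1) div r - 1)"
proof -
  obtain B where "steiner_system_2 r n B"
    using assms(3) by blast
  then interpret steiner_system r n B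
    using assms(1) by unfold_locales
  obtain w :: "nat set \<times> nat \<Rightarrow> 'a"
    where "\<forall>\<beta>\<in>B. inj_on (\<lambda>p. w (\<beta>, p)) \<beta> \<and> w (\<beta>, Min \<beta>) = 0"
    using ex_block_weights[OF assms(2)] by blast
  then interpret steiner_code r n B w
    by unfold_locales auto
  show ?thesis
    using regenerating_code_with_uncoded_repair by blast
qed

end
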